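(* Consider the multiobjective optimal control setting, Assumption A and Algorithm 1 described in the context, let $x_0\in\mathbb{X}_N$, and assume in addition that there is $\gamma_{\lambda_1}\in\mathcal K_\infty$ with $|\lambda_1(x)-\lambda_1(x^e)|\le\gamma_{\lambda_1}(\|x-x^e\|)$ for all $x\in\mathbb{X}$, and that $\ell_1(x^e,u^e)=0$. Then the MPC feedback $\mu^N:\mathbb{N}_0\times\mathbb{X}\to\mathbb{U}$ defined by Algorithm 1 renders the set $\mathbb{X}$ forward invariant (the closed loop is well defined and stays in $\mathbb{X}$) and has the infinite-horizon closed-loop performance \[J_1^\infty(x_0,\mu^N):=\sum_{k=0}^\infty\ell_1\big(x_\mu(k,x_0),\mu^N(k,x_\mu(k,x_0))\big)\le J_1^N(x_0,\mathbf{u}^\star_{x_0}),\] where $\mathbf{u}^\star_{x_0}$ is the efficient solution chosen in step (0) of Algorithm 1.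
   Context: Let $f:\mathbb{R}^n\times\mathbb{R}^m\to\mathbb{R}^n$ be continuous and consider $x(k+1)=f(x(k),u(k))$, $x(0)=x_0$; $x_{\mathbf{u}}(k,x_0)$ denotes the solution for control sequence $\mathbf u$. Let $\mathbb{X}\subseteq\mathbb{R}^n$, $\mathbb{U}\subseteq\mathbb{R}^m$, $\mathbb{X}_0\subseteq\mathbb{X}$ be nonempty; horizons $N\ge2$, objectives $s\ge2$. $\mathbb{U}^N(x_0)$ is the set of $\mathbf{u}\in\mathbb{U}^N$ with $x_{\mathbf{u}}(k,x_0)\in\mathbb{X}$ for $k=1,\dots,N-1$ and $x_{\mathbf{u}}(N,x_0)\in\mathbb{X}_0$; $\mathbb{X}_N=\{x_0\in\mathbb{X}:\mathbb{U}^N(x_0)\neq\emptyset\}$. With stage costs $\ell_i:\mathbb{X}\times\mathbb{U}\to\mathbb{R}$ ($i=1,\dots,s$) and continuous $F_1:\mathbb{X}_0\to\mathbb{R}_{\ge0}$: $J_1^N(x_0,\mathbf{u})=\sum_{k=0}^{N-1}\ell_1(x_{\mathbf{u}}(k,x_0),u(k))+F_1(x_{\mathbf{u}}(N,x_0))$, $J_i^N(x_0,\mathbf{u})=\sum_{k=0}^{N-1}\ell_i(x_{\mathbf{u}}(k,x_0),u(k))$ for $i\ge2$. $\mathbf{u}^\star\in\mathbb{U}^N(x_0)$ is efficient if no $\mathbf{u}\in\mathbb{U}^N(x_0)$ satisfies $J_i^N(x_0,\mathbf{u})\le J_i^N(x_0,\mathbf{u}^\star)$ for all $i$ with strict inequality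 for some $i$; $\mathbb{U}^N_{\mathcal P}(x_0)$ is the efficient set. $\mathcal{J}^N(x_0)$ is the set of vectors $(J_i^N(x_0,\mathbf u))_{i=1}^s$, $\mathbf u\in\mathbb{U}^N(x_0)$, $\mathcal{J}^N_{\mathcal P}(x_0)$ the subset for efficient $\mathbf u$; external stability means every $y\in\mathcal{J}^N(x_0)$ dominates componentwise some $y_{\mathcal P}\in\mathcal{J}^N_{\mathcal P}(x_0)$. $\mathcal K_\infty$: continuous strictly increasing unbounded functions $\mathbb{R}_{\ge0}\to\mathbb{R}_{\ge0}$ vanishing at $0$. Assumption A: (i) $(x^e,u^e)\in\mathbb{X}\times\mathbb{U}$ with $f(x^e,u^e)=x^e$; (ii) $\lambda_1:\mathbb{X}\to\mathbb{R}$ bounded below, $\lambda_1(x^e)=0$, $\alpha_{\ell,1}\in\mathcal K_\infty$ with $\ell_1(x,u)-\ell_1(x^e,u^e)+\lambda_1(x)-\lambda_1(f(x,u))\ge\alpha_{\ell,1}(\|x-x^e\|+\|u-u^e\|)$ on $\mathbb{X}\times\mathbb{U}$; (iii) all $\ell_i$ continuous; (iv) $x^e\in\mathbb{X}_0$ and $\kappa:\mathbb{X}_0\to\mathbb{U}$ with $f(x,\kappa(x))\in\mathbb{X}_0$ and $F_1(f(x,\kappa(x)))+\ell_1(x,\kappa(x))\le F_1(x)+\ell_1(x^e,u^e)$ for all $x\in\mathbb{X}_0$; (v) $\mathcal{J}^N_{\mathcal P}(x)$ externally stable for $\mathcal{J}^N(x)$ for all $x\in\mathbb{X}_N$. Algorithm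 1 ($k\in\mathbb N_0$): $x(0)=x_0$, choose any $\mathbf{u}^\star_{x(0)}=\mathbf{u}^\star_{x_0}\in\mathbb{U}^N_{\mathcal P}(x(0))$; for $k\ge1$ choose $\mathbf{u}^\star_{x(k)}\in\mathbb{U}^N_{\mathcal P}(x(k))$ with $J_1^N(x(k),\mathbf{u}^\star_{x(k)})\le J_1^N(x(k),\mathbf{u}_{x(k)})$, where $\mathbf{u}_{x(k+1)}:=(u^\star_{x(k)}(1),\dots,u^\star_{x(k)}(N-1),\kappa(x_{\mathbf{u}^\star_{x(k)}}(N,x(k))))$. Feedback $\mu^N(k,x(k)):=u^\star_{x(k)}(0)$, $x(k+1)=f(x(k),\mu^N(k,x(k)))$, $x_\mu(k,x_0):=x(k)$. The statement applies to any admissible choices of efficient solutions. *)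

theory Defs
  imports "HOL-Analysis.Analysis"
begin

definition Kinf :: "(real \<Rightarrow> real) \<Rightarrow> bool" where
  "Kinf \<alpha> \<longleftrightarrow> continuous_on {0..} \<alpha> \<and> strict_mono_on {0..} \<alpha> \<and> \<alpha> 0 = 0
     \<and> (\<forall>r\<ge>0. \<alpha> r \<ge> 0) \<and> \<not> bdd_above (\<alpha> ` {0..})"

primrec traj :: "('x \<Rightarrow> 'u \<Rightarrow> 'x) \<Rightarrow> 'x \<Rightarrow> 'u list \<Rightarrow> nat \<Rightarrow> 'x" where
  "traj f x0 us 0 = x0"
| "traj f x0 us (Suc k) = f (traj f x0 us k) (us ! k)"

definition adm_controls ::
  "('x \<Rightarrow> 'u \<Rightarrow> 'x) \<Rightarrow> 'x set \<Rightarrow> 'u set \<Rightarrow> 'x set \<Rightarrow> nat \<Rightarrow> 'x \<Rightarrow> 'u list set" where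
  "adm_controls f X U X0 N x0 =
     {us. length us = N \<and> set us \<subseteq> U \<and> (\<forall>k\<in>{1..N-1}. traj f x0 us k \<in> X)
          \<and> traj f x0 us N \<in> X0}"

definition feasible_set ::
  "('x \<Rightarrow> 'u \<Rightarrow> 'x) \<Rightarrow> 'x set \<Rightarrow> 'u set \<Rightarrow> 'x set \<Rightarrow> nat \<Rightarrow> 'x set" where
  "feasible_set f X U X0 N = {x0 \<in> X. adm_controls f X U X0 N x0 \<noteq> {}}"

definition Jcost ::
  "('x \<Rightarrow> 'u \<Rightarrow> 'x) \<Rightarrow> nat \<Rightarrow> (nat \<Rightarrow> 'x \<Rightarrow> 'u \<Rightarrow> real) \<Rightarrow> ('x \<Rightarrow> real)
    \<Rightarrow> nat \<Rightarrow> 'x \<Rightarrow> 'u list \<Rightarrow> real" where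
  "Jcost f N ell F1 i x0 us =
     (\<Sum>k<N. ell i (traj f x0 us k) (us ! k)) + (if i = 1 then F1 (traj f x0 us N) else 0)"

definition eff_controls ::
  "('x \<Rightarrow> 'u \<Rightarrow> 'x) \<Rightarrow> 'x set \<Rightarrow> 'u set \<Rightarrow> 'x set \<Rightarrow> nat \<Rightarrow> nat
    \<Rightarrow> (nat \<Rightarrow> 'x \<Rightarrow> 'u \<Rightarrow> real) \<Rightarrow> ('x \<Rightarrow> real) \<Rightarrow> 'x \<Rightarrow> 'u list set" where
  "eff_controls f X U X0 N s ell F1 x0 =
     {us \<in> adm_controls f X U X0 N x0.
        \<not> (\<exists>vs \<in> adm_controls f X U X0 N x0.
              (\<forall>i\<in>{1..s}. Jcost f N ell F1 i x0 vs \<le> Jcost f N ell F1 i x0 us)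
            \<and> (\<exists>i\<in>{1..s}. Jcost f N ell F1 i x0 vs < Jcost f N ell F1 i x0 us))}"

definition cost_vectors ::
  "('x \<Rightarrow> 'u \<Rightarrow> 'x) \<Rightarrow> nat \<Rightarrow> nat \<Rightarrow> (nat \<Rightarrow> 'x \<Rightarrow> 'u \<Rightarrow> real) \<Rightarrow> ('x \<Rightarrow> real)
    \<Rightarrow> 'x \<Rightarrow> 'u list set \<Rightarrow> (nat \<Rightarrow> real) set" where
  "cost_vectors f N s ell F1 x0 A =
     (\<lambda>us. restrict (\<lambda>i. Jcost f N ell F1 i x0 us) {1..s}) ` A"

definition externally_stable :: "nat \<Rightarrow> (nat \<Rightarrow> real) set \<Rightarrow> (nat \<Rightarrow> real) set \<Rightarrow> bool" where
  "externally_stable s YP Y \<longleftrightarrow> (\<forall>y\<in>Y. \<exists>yP\<in>YP. \<forall>i\<in>{1..s}. yP i \<le> y i)"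

definition shifted_seq ::
  "('x \<Rightarrow> 'u \<Rightarrow> 'x) \<Rightarrow> nat \<Rightarrow> ('x \<Rightarrow> 'u) \<Rightarrow> 'x \<Rightarrow> 'u list \<Rightarrow> 'u list" where
  "shifted_seq f N \<kappa> x us = tl us @ [\<kappa> (traj f x us N)]"

text \<open>Algorithm 1 run up to time K: closed-loop states xcl 0..K and chosen
  efficient sequences us 0..K; feedback mu^N(k, x(k)) = us k ! 0.\<close>
definition alg1_prefix ::
  "('x \<Rightarrow> 'u \<Rightarrow> 'x) \<Rightarrow> 'x set \<Rightarrow> 'u set \<Rightarrow> 'x set \<Rightarrow> nat \<Rightarrow> nat
    \<Rightarrow> (nat \<Rightarrow> 'x \<Rightarrow> 'u \<Rightarrow> real) \<Rightarrow> ('x \<Rightarrow> real) \<Rightarrow> ('x \<Rightarrow> 'u) \<Rightarrow> 'x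
    \<Rightarrow> nat \<Rightarrow> (nat \<Rightarrow> 'x) \<Rightarrow> (nat \<Rightarrow> 'u list) \<Rightarrow> bool" where
  "alg1_prefix f X U X0 N s ell F1 \<kappa> x0 K xcl us \<longleftrightarrow>
     xcl 0 = x0 \<and> us 0 \<in> eff_controls f X U X0 N s ell F1 x0 \<and>
     (\<forall>k<K. xcl (Suc k) = f (xcl k) (us k ! 0)
        \<and> us (Suc k) \<in> eff_controls f X U X0 N s ell F1 (xcl (Suc k))
        \<and> Jcost f N ell F1 1 (xcl (Suc k)) (us (Suc k))
            \<le> Jcost f N ell F1 1 (xcl (Suc k)) (shifted_seq f N \<kappa> (xcl k) (us k)))"

end

theory Submission
  imports Defs
begin

(* By strict dissipativity and ell_1(xe,ue) = 0, the rotated stage cost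
   ell_1(x,u) + lambda_1(x) - lambda_1(f(x,u)) dominates alpha(|x - xe|).
   Shifting the previous efficient sequence and appending kappa yields an admissible
   candidate, so the choice rule of Algorithm 1 makes V(k) = J_1^N(x(k), u*_x(k)) drop by
   at least the applied stage cost.  Summing the dissipation inequality along an admissible
   sequence bounds V(k) + lambda_1(x(k)) below by F_1 + lambda_1 at its terminal state,
   which is nonnegative since F_1 + lambda_1 is a Lyapunov function for kappa on X0 whose
   orbits converge to xe.  Hence the nonnegative quantity V + lambda_1 decreases by the
   rotated cost, the rotated costs are summable, x(k) -> xe, lambda_1(x(k)) -> 0, and the
   partial sums of the stage costs stay below V(0) + lambda_1(x(K)) -> V(0). *)

lemma Kinf_mono: "Kinf a \<Longrightarrow> 0 \<le> x \<Longrightarrow> x \<le> y \<Longrightarrow> a x \<le> a y"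
  unfolding Kinf_def strict_mono_on_def
  by (metis atLeast_iff dual_order.trans order_le_less)

lemma Kinf_nonneg: "Kinf a \<Longrightarrow> 0 \<le> x \<Longrightarrow> 0 \<le> a x"
  unfolding Kinf_def by auto

lemma Kinf_pos: "Kinf a \<Longrightarrow> 0 < x \<Longrightarrow> 0 < a x"
  unfolding Kinf_def strict_mono_on_def by (metis atLeast_iff order_refl less_imp_le)

lemma Kinf_tendsto_0_iff:
  assumes a: "Kinf a" and r: "\<And>j. 0 \<le> r j"
  shows "((\<lambda>j. a (r j)) \<longlongrightarrow> 0) F \<longleftrightarrow> (r \<longlongrightarrow> 0) F"
proof
  assume lim: "((\<lambda>j. a (r j)) \<longlongrightarrow> 0) F"
  show "(r \<longlongrightarrow> 0) F"
  proof (rule order_tendstoI)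
    fix e :: real assume "0 < e"
    then have "\<forall>\<^sub>F j in F. a (r j) < a e"
      using order_tendstoD(2)[OF lim] Kinf_pos[OF a] by blast
    then show "\<forall>\<^sub>F j in F. r j < e"
      by (rule eventually_mono) (meson Kinf_mono[OF a] \<open>0 < e\<close> less_imp_le not_le)
  qed (use r in \<open>auto intro: always_eventually less_le_trans[of _ 0]\<close>)
next
  assume "(r \<longlongrightarrow> 0) F"
  moreover have "continuous_on {0..} a" "a 0 = 0" using a unfolding Kinf_def by auto
  ultimately show "((\<lambda>j. a (r j)) \<longlongrightarrow> 0) F"
    using continuous_on_tendsto_compose[of "{0..}" a r 0 F] r by auto
qed

lemma sum_le_of_decrement:
  fixes W c :: "nat \<Rightarrow> real"
  assumes "\<And>k. W (Suc k) + c k \<le> W k"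
  shows "(\<Sum>k<n. c k) \<le> W 0 - W n"
proof (induction n)
  case (Suc n)
  then show ?case using assms[of n] by simp
qed simp

lemma summable_of_decrement:
  fixes W c :: "nat \<Rightarrow> real"
  assumes "\<And>k. W (Suc k) + c k \<le> W k" "\<And>k. 0 \<le> c k" "\<And>k. b \<le> W k"
  shows "summable c"
proof (rule summableI_nonneg_bounded)
  show "(\<Sum>k<n. c k) \<le> W 0 - b" for n
    using sum_le_of_decrement[of W c n, OF assms(1)] assms(3)[of n] by linarith
qed (fact assms(2))

lemma tendsto_of_summable_Kinf:
  fixes x :: "nat \<Rightarrow> 'a::real_normed_vector"
  assumes a: "Kinf a" and "summable (\<lambda>k. a (norm (x k - xe)))"
  shows "x \<longlonglongrightarrow> xe"
proof -
  have "(\<lambda>k. a (norm (x k - xe))) \<longlonglongrightarrow> 0"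
    using assms(2) by (rule summable_LIMSEQ_zero)
  then have "(\<lambda>k. norm (x k - xe)) \<longlonglongrightarrow> 0"
    using Kinf_tendsto_0_iff[OF a, of "\<lambda>k. norm (x k - xe)"] by simp
  then show ?thesis
    by (simp add: tendsto_norm_zero_iff LIM_zero_iff)
qed

lemma continuous_within_of_Kinf_bound:
  fixes lam :: "'a::real_normed_vector \<Rightarrow> real"
  assumes g: "Kinf g" and bound: "\<forall>x\<in>X. \<bar>lam x - lam xe\<bar> \<le> g (norm (x - xe))"
  shows "continuous (at xe within X) lam"
proof -
  have "((\<lambda>x. norm (x - xe)) \<longlongrightarrow> 0) (at xe within X)"
    by (intro tendsto_norm_zero LIM_zero tendsto_ident_at)
  then have g_lim: "((\<lambda>x. g (norm (x - xe))) \<longlongrightarrow> 0) (at xe within X)"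
    using Kinf_tendsto_0_iff[OF g, of "\<lambda>x. norm (x - xe)"] by simp
  have "\<forall>\<^sub>F x in at xe within X. norm (lam x - lam xe) \<le> g (norm (x - xe))"
    using bound by (intro eventually_at_topological[THEN iffD2] exI[of _ UNIV]) simp
  then have "((\<lambda>x. lam x - lam xe) \<longlongrightarrow> 0) (at xe within X)"
    using g_lim by (rule Lim_null_comparison)
  then show ?thesis
    by (simp add: continuous_within LIM_zero_iff)
qed

lemma nonneg_of_Lyapunov_decrease:
  fixes g :: "'a::real_normed_vector \<Rightarrow> 'a" and W :: "'a \<Rightarrow> real"
  assumes a: "Kinf a" and invariant: "\<forall>x\<in>S. g x \<in> S" and bdd: "bdd_below (W ` S)"
    and cont: "continuous (at xe within S) W" and "0 \<le> W xe"
    and decrease: "\<forall>x\<in>S. W (g x) + a (norm (x - xe)) \<le> W x" and x: "x \<in> S"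
  shows "0 \<le> W x"
proof -
  define y where "y j = (g ^^ j) x" for j
  have y_S: "y j \<in> S" for j
    by (induction j) (use x invariant in \<open>auto simp: y_def\<close>)
  have y_decrease: "W (y (Suc j)) + a (norm (y j - xe)) \<le> W (y j)" for j
    using decrease y_S by (simp add: y_def)
  have a_nonneg: "0 \<le> a (norm (y j - xe))" for j
    using Kinf_nonneg[OF a] by simp
  obtain b where "\<And>j. b \<le> W (y j)"
    using bdd y_S by (meson bdd_below.E imageI)
  then have "summable (\<lambda>j. a (norm (y j - xe)))"
    by (intro summable_of_decrement[of "\<lambda>j. W (y j)", OF y_decrease a_nonneg])
  then have "y \<longlonglongrightarrow> xe"
    by (rule tendsto_of_summable_Kinf[OF a])
  then have "(\<lambda>j. W (y j)) \<longlonglongrightarrow> W xe"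
    by (intro continuous_within_tendsto_compose'[OF cont] y_S)
  moreover have "W (y j) \<le> W x" for j
  proof -
    have "0 \<le> (\<Sum>i<j. a (norm (y i - xe)))"
      by (simp add: a_nonneg sum_nonneg)
    then show ?thesis
      using sum_le_of_decrement[of "\<lambda>j. W (y j)", OF y_decrease, of j] by (simp add: y_def)
  qed
  ultimately have "W xe \<le> W x"
    by (intro LIMSEQ_le_const2) auto
  with \<open>0 \<le> W xe\<close> show ?thesis by simp
qed

lemma summable_stage_cost_of_dissipation:
  fixes x :: "nat \<Rightarrow> 'a::real_normed_vector" and V e :: "nat \<Rightarrow> real"
  assumes a: "Kinf a" and decrease: "\<And>k. V (Suc k) + e k \<le> V k"
    and lower: "\<And>k. 0 \<le> V k + lam (x k)"
    and dissipation: "\<And>k. a (norm (x k - xe)) \<le> e k + lam (x k) - lam (x (Suc k))"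
    and cont: "continuous (at xe within X) lam" and x_X: "\<And>k. x k \<in> X"
  shows "summable e" and "suminf e \<le> V 0 + lam xe"
proof -
  \<comment> \<open>L is the rotated stage cost, by which the nonnegative V + lam decreases\<close>
  define L where "L k = e k + lam (x k) - lam (x (Suc k))" for k
  have a_nonneg: "0 \<le> a (norm (x k - xe))" for k
    using Kinf_nonneg[OF a] by simp
  have "summable L"
  proof (rule summable_of_decrement[of "\<lambda>k. V k + lam (x k)" _ 0])
    show "V (Suc k) + lam (x (Suc k)) + L k \<le> V k + lam (x k)" for k
      using decrease[of k] by (simp add: L_def)
    show "0 \<le> L k" for k
      using dissipation[of k] a_nonneg[of k] by (simp add: L_def)
  qed (fact lower)
  then have "summable (\<lambda>k. a (norm (x k - xe)))"
    by (rule summable_comparison_test') (use dissipation a_nonneg in \<open>simp add: L_def\<close>)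
  then have "x \<longlonglongrightarrow> xe"
    by (rule tendsto_of_summable_Kinf[OF a])
  then have "(\<lambda>k. lam (x k)) \<longlonglongrightarrow> lam xe"
    by (intro continuous_within_tendsto_compose'[OF cont] x_X)
  then have "summable (\<lambda>k. L k - (lam (x k) - lam (x (Suc k))))"
    by (intro summable_diff \<open>summable L\<close> sums_summable[OF telescope_sums'])
  then show "summable e"
    by (simp add: L_def)
  moreover have "(\<lambda>n. V 0 + lam (x n)) \<longlonglongrightarrow> V 0 + lam xe"
    by (intro tendsto_intros \<open>(\<lambda>k. lam (x k)) \<longlonglongrightarrow> lam xe\<close>)
  moreover have "(\<Sum>k<n. e k) \<le> V 0 + lam (x n)" for n
    using sum_le_of_decrement[of V e n, OF decrease] lower[of n] by linarith
  ultimately show "suminf e \<le> V 0 + lam xe"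
    by (intro LIMSEQ_le[OF summable_LIMSEQ]) auto
qed

lemma traj_tl_append:
  assumes "k < length us"
  shows "traj f (f x (us ! 0)) (tl us @ [w]) k = traj f x us (Suc k)"
  using assms
proof (induction k)
  case (Suc k)
  then have "k < length (tl us)" by simp
  then have "(tl us @ [w]) ! k = us ! Suc k"
    by (simp add: nth_append nth_tl)
  with Suc show ?case by simp
qed simp

lemma traj_tl_append_length:
  assumes "us \<noteq> []"
  shows "traj f (f x (us ! 0)) (tl us @ [w]) (length us) = f (traj f x us (length us)) w"
proof -
  obtain M where M: "length us = Suc M" using assms by (cases us) auto
  then show ?thesis
    using traj_tl_append[of M us f x w] by (simp add: nth_append)
qed

lemma adm_controls_nth_in:
  "us \<in> adm_controls f X U X0 N x \<Longrightarrow> k < N \<Longrightarrow> us ! k \<in> U"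
  unfolding adm_controls_def by (auto dest: nth_mem)

lemma adm_controls_traj_in:
  assumes "us \<in> adm_controls f X U X0 N x" "x \<in> X" "k < N"
  shows "traj f x us k \<in> X"
proof (cases k)
  case (Suc j)
  then have "k \<in> {1..N-1}" using \<open>k < N\<close> by simp
  then show ?thesis using assms(1) unfolding adm_controls_def by blast
qed (use \<open>x \<in> X\<close> in simp)

lemma adm_controls_first_state_in:
  "us \<in> adm_controls f X U X0 N x \<Longrightarrow> 2 \<le> N \<Longrightarrow> f x (us ! 0) \<in> X"
  unfolding adm_controls_def by (auto dest: bspec[of _ _ 1])

lemma shifted_seq_adm_controls:
  assumes us: "us \<in> adm_controls f X U X0 N x" and "0 < N" and "X0 \<subseteq> X"
    and \<kappa>_U: "\<forall>x\<in>X0. \<kappa> x \<in> U" and \<kappa>_X0: "\<forall>x\<in>X0. f x (\<kappa> x) \<in> X0"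
  shows "shifted_seq f N \<kappa> x us \<in> adm_controls f X U X0 N (f x (us ! 0))"
proof -
  let ?z = "traj f x us N"
  have len: "length us = N" and set_us: "set us \<subseteq> U" and z: "?z \<in> X0"
    and mid: "\<forall>k\<in>{1..N-1}. traj f x us k \<in> X"
    using us unfolding adm_controls_def by auto
  have "us \<noteq> []" using len \<open>0 < N\<close> by auto
  have "set (tl us) \<subseteq> U"
    using set_us by (cases us) auto
  then have "set (shifted_seq f N \<kappa> x us) \<subseteq> U"
    using \<kappa>_U z by (simp add: shifted_seq_def)
  moreover have "traj f (f x (us ! 0)) (shifted_seq f N \<kappa> x us) k \<in> X" if "k \<in> {1..N-1}" for k
  proof -
    have "traj f (f x (us ! 0)) (shifted_seq f N \<kappa> x us) k = traj f x us (Suc k)"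
      unfolding shifted_seq_def using that len by (intro traj_tl_append) auto
    moreover have "traj f x us (Suc k) \<in> X"
    proof (cases "Suc k = N")
      case False
      with that have "Suc k \<in> {1..N-1}" by auto
      with mid show ?thesis by blast
    qed (use z \<open>X0 \<subseteq> X\<close> in auto)
    ultimately show ?thesis by simp
  qed
  moreover have "traj f (f x (us ! 0)) (shifted_seq f N \<kappa> x us) N \<in> X0"
    using traj_tl_append_length[OF \<open>us \<noteq> []\<close>, of f x "\<kappa> ?z"] len z \<kappa>_X0
    by (simp add: shifted_seq_def)
  ultimately show ?thesis
    using len \<open>0 < N\<close> unfolding adm_controls_def shifted_seq_def by simp
qed

lemma Jcost_1_shifted_seq:
  assumes len: "length us = N" and "0 < N"
  shows "Jcost f N ell F1 1 (f x (us ! 0)) (shifted_seq f N \<kappa> x us) + ell 1 x (us ! 0)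
           + F1 (traj f x us N)
         = Jcost f N ell F1 1 x us + ell 1 (traj f x us N) (\<kappa> (traj f x us N))
           + F1 (f (traj f x us N) (\<kappa> (traj f x us N)))"
proof -
  obtain M where M: "N = Suc M" using \<open>0 < N\<close> gr0_implies_Suc by blast
  let ?z = "traj f x us N" and ?sh = "tl us @ [\<kappa> (traj f x us N)]"
  let ?tail = "\<Sum>k<M. ell 1 (traj f x us (Suc k)) (us ! Suc k)"
  have "(\<Sum>k<M. ell 1 (traj f (f x (us ! 0)) ?sh k) (?sh ! k)) = ?tail"
    by (rule sum.cong) (use len M in \<open>auto simp: traj_tl_append nth_append nth_tl\<close>)
  moreover have "traj f (f x (us ! 0)) ?sh M = ?z" "?sh ! M = \<kappa> ?z"
    using traj_tl_append[of M us] len M by (auto simp: nth_append)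
  ultimately have shifted_sum: "(\<Sum>k<N. ell 1 (traj f (f x (us ! 0)) ?sh k) (?sh ! k))
      = ?tail + ell 1 ?z (\<kappa> ?z)"
    unfolding M by simp
  have sum: "(\<Sum>k<N. ell 1 (traj f x us k) (us ! k)) = ell 1 x (us ! 0) + ?tail"
    unfolding M sum.lessThan_Suc_shift by simp
  have "traj f (f x (us ! 0)) ?sh N = f ?z (\<kappa> ?z)"
    using traj_tl_append_length[of us f x "\<kappa> ?z"] len \<open>0 < N\<close> by auto
  with shifted_sum sum show ?thesis
    unfolding Jcost_def shifted_seq_def by simp
qed

lemma Jcost_1_ge_storage_difference:
  assumes us: "us \<in> adm_controls f X U X0 N x" and "x \<in> X"
    and storage: "\<And>x u. x \<in> X \<Longrightarrow> u \<in> U \<Longrightarrow> lam (f x u) - lam x \<le> ell 1 x u"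
  shows "lam (traj f x us N) - lam x + F1 (traj f x us N) \<le> Jcost f N ell F1 1 x us"
proof -
  have "lam (traj f x us n) - lam x \<le> (\<Sum>k<n. ell 1 (traj f x us k) (us ! k))" if "n \<le> N" for n
    using that
  proof (induction n)
    case (Suc n)
    have "lam (f (traj f x us n) (us ! n)) - lam (traj f x us n) \<le> ell 1 (traj f x us n) (us ! n)"
      using Suc.prems
      by (intro storage adm_controls_traj_in[OF us \<open>x \<in> X\<close>] adm_controls_nth_in[OF us]) simp_all
    with Suc show ?case by simp
  qed simp
  from this[of N] show ?thesis
    unfolding Jcost_def by simp
qed

lemma efficient_le_of_externally_stable:
  assumes "externally_stable s (cost_vectors f N s ell F1 x (eff_controls f X U X0 N s ell F1 x))
             (cost_vectors f N s ell F1 x (adm_controls f X U X0 N x))"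
    and "us \<in> adm_controls f X U X0 N x" and i: "i \<in> {1..s}"
  shows "\<exists>v\<in>eff_controls f X U X0 N s ell F1 x. Jcost f N ell F1 i x v \<le> Jcost f N ell F1 i x us"
proof -
  obtain v where "v \<in> eff_controls f X U X0 N s ell F1 x"
    "\<forall>j\<in>{1..s}. Jcost f N ell F1 j x v \<le> Jcost f N ell F1 j x us"
    using assms(1,2) unfolding externally_stable_def cost_vectors_def by fastforce
  with i show ?thesis by blast
qed

lemma eff_controls_imp_adm_controls:
  "us \<in> eff_controls f X U X0 N s ell F1 x \<Longrightarrow> us \<in> adm_controls f X U X0 N x"
  unfolding eff_controls_def by blast

locale dissipative_mpc =
  fixes f :: "'x::real_normed_vector \<Rightarrow> 'u::real_normed_vector \<Rightarrow> 'x"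
    and X X0 :: "'x set" and U :: "'u set" and N s :: nat
    and ell :: "nat \<Rightarrow> 'x \<Rightarrow> 'u \<Rightarrow> real" and F1 :: "'x \<Rightarrow> real"
    and \<kappa> :: "'x \<Rightarrow> 'u" and xe :: 'x and ue :: 'u
    and lam :: "'x \<Rightarrow> real" and alpha gamma :: "real \<Rightarrow> real"
  assumes N_ge: "N \<ge> 2" and s_pos: "s \<ge> 1" and X0_sub: "X0 \<subseteq> X"
    and F1_cont: "continuous_on X0 F1" and F1_nonneg: "\<forall>x\<in>X0. F1 x \<ge> 0"
    and lam_bdd: "bdd_below (lam ` X)" and lam_xe: "lam xe = 0"
    and alpha_K: "Kinf alpha"
    and dissip: "\<forall>x\<in>X. \<forall>u\<in>U. ell 1 x u - ell 1 xe ue + lam x - lam (f x u)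
                    \<ge> alpha (norm (x - xe) + norm (u - ue))"
    and ell_eq: "ell 1 xe ue = 0"
    and xe_X0: "xe \<in> X0"
    and kappa_U: "\<forall>x\<in>X0. \<kappa> x \<in> U"
    and kappa_inv: "\<forall>x\<in>X0. f x (\<kappa> x) \<in> X0"
    and kappa_dec: "\<forall>x\<in>X0. F1 (f x (\<kappa> x)) + ell 1 x (\<kappa> x) \<le> F1 x + ell 1 xe ue"
    and ext_stab: "\<forall>x\<in>feasible_set f X U X0 N.
        externally_stable s
          (cost_vectors f N s ell F1 x (eff_controls f X U X0 N s ell F1 x))
          (cost_vectors f N s ell F1 x (adm_controls f X U X0 N x))"
    and gamma_K: "Kinf gamma"
    and lam_cont: "\<forall>x\<in>X. \<bar>lam x - lam xe\<bar> \<le> gamma (norm (x - xe))"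
begin

abbreviation "adm \<equiv> adm_controls f X U X0 N"
abbreviation "eff \<equiv> eff_controls f X U X0 N s ell F1"
abbreviation "feasible \<equiv> feasible_set f X U X0 N"
abbreviation "J1 \<equiv> Jcost f N ell F1 1"
abbreviation "shifted \<equiv> shifted_seq f N \<kappa>"
abbreviation "alg1 \<equiv> alg1_prefix f X U X0 N s ell F1 \<kappa>"

lemma stage_cost_dissipation:
  assumes "x \<in> X" "u \<in> U"
  shows "lam (f x u) - lam x + alpha (norm (x - xe)) \<le> ell 1 x u"
proof -
  have "alpha (norm (x - xe)) \<le> alpha (norm (x - xe) + norm (u - ue))"
    by (rule Kinf_mono[OF alpha_K]) auto
  moreover have "alpha (norm (x - xe) + norm (u - ue)) \<le> ell 1 x u - ell 1 xe ue + lam x - lam (f x u)"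
    using dissip assms by blast
  ultimately show ?thesis
    using ell_eq by linarith
qed

lemma lam_continuous_at_xe: "continuous (at xe within X) lam"
  by (rule continuous_within_of_Kinf_bound[OF gamma_K lam_cont])

lemma terminal_cost_plus_storage_nonneg:
  assumes "x \<in> X0"
  shows "0 \<le> F1 x + lam x"
proof (rule nonneg_of_Lyapunov_decrease[OF alpha_K kappa_inv _ _ _ _ assms])
  obtain b where "\<forall>x\<in>X. b \<le> lam x"
    using lam_bdd by (auto simp: bdd_below_def)
  then show "bdd_below ((\<lambda>x. F1 x + lam x) ` X0)"
    using F1_nonneg X0_sub by (intro bdd_belowI2[of _ b]) (auto intro: add_increasing)
  have "continuous (at xe within X0) lam"
    using lam_continuous_at_xe X0_sub by (rule continuous_within_subset)
  then show "continuous (at xe within X0) (\<lambda>x. F1 x + lam x)"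
    using F1_cont xe_X0 by (intro continuous_add) (auto simp: continuous_on_eq_continuous_within)
  show "0 \<le> F1 xe + lam xe"
    using F1_nonneg xe_X0 lam_xe by simp
  show "\<forall>x\<in>X0. F1 (f x (\<kappa> x)) + lam (f x (\<kappa> x)) + alpha (norm (x - xe)) \<le> F1 x + lam x"
  proof
    fix x assume "x \<in> X0"
    then have "lam (f x (\<kappa> x)) - lam x + alpha (norm (x - xe)) \<le> ell 1 x (\<kappa> x)"
      using X0_sub kappa_U by (intro stage_cost_dissipation) auto
    moreover have "F1 (f x (\<kappa> x)) + ell 1 x (\<kappa> x) \<le> F1 x"
      using kappa_dec \<open>x \<in> X0\<close> ell_eq by fastforce
    ultimately show "F1 (f x (\<kappa> x)) + lam (f x (\<kappa> x)) + alpha (norm (x - xe)) \<le> F1 x + lam x"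
      by linarith
  qed
qed

lemma J1_plus_storage_nonneg:
  assumes "us \<in> adm x" "x \<in> X"
  shows "0 \<le> J1 x us + lam x"
proof -
  have "lam (f y u) - lam y \<le> ell 1 y u" if "y \<in> X" "u \<in> U" for y u
    using stage_cost_dissipation[OF that] Kinf_nonneg[OF alpha_K, of "norm (y - xe)"] by simp
  with assms have "lam (traj f x us N) - lam x + F1 (traj f x us N) \<le> J1 x us"
    by (rule Jcost_1_ge_storage_difference)
  moreover have "traj f x us N \<in> X0"
    using assms(1) unfolding adm_controls_def by blast
  ultimately show ?thesis
    using terminal_cost_plus_storage_nonneg[of "traj f x us N"] by linarith
qed

lemma successor_feasible:
  assumes "us \<in> adm x"
  shows "f x (us ! 0) \<in> feasible" and "shifted x us \<in> adm (f x (us ! 0))"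
proof -
  show "shifted x us \<in> adm (f x (us ! 0))"
    using shifted_seq_adm_controls[OF assms _ X0_sub kappa_U kappa_inv] N_ge by simp
  then show "f x (us ! 0) \<in> feasible"
    using adm_controls_first_state_in[OF assms N_ge] unfolding feasible_set_def by blast
qed

lemma exists_efficient_le:
  assumes "x \<in> feasible" "us \<in> adm x"
  shows "\<exists>v\<in>eff x. J1 x v \<le> J1 x us"
  using efficient_le_of_externally_stable[OF ext_stab[rule_format, OF assms(1)] assms(2)] s_pos
  by simp

lemma J1_shifted_le:
  assumes "us \<in> adm x"
  shows "J1 (f x (us ! 0)) (shifted x us) + ell 1 x (us ! 0) \<le> J1 x us"
proof -
  let ?z = "traj f x us N"
  have "length us = N" "?z \<in> X0"
    using assms unfolding adm_controls_def by auto
  then have "F1 (f ?z (\<kappa> ?z)) + ell 1 ?z (\<kappa> ?z) \<le> F1 ?z"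
    using kappa_dec ell_eq by fastforce
  moreover have "J1 (f x (us ! 0)) (shifted x us) + ell 1 x (us ! 0) + F1 ?z
      = J1 x us + ell 1 ?z (\<kappa> ?z) + F1 (f ?z (\<kappa> ?z))"
    using Jcost_1_shifted_seq[OF \<open>length us = N\<close>] N_ge by simp
  ultimately show ?thesis
    by linarith
qed

lemma alg1_prefix_invariant:
  assumes run: "alg1 x0 K xcl us" and "x0 \<in> X" and "k \<le> K"
  shows "us k \<in> eff (xcl k)" and "xcl k \<in> X"
proof -
  have eff_j: "us j \<in> eff (xcl j)" if "j \<le> K" for j
    using run that unfolding alg1_prefix_def by (cases j) (blast dest: Suc_le_lessD)+
  then show "us k \<in> eff (xcl k)"
    using \<open>k \<le> K\<close> .
  show "xcl k \<in> X"
  proof (cases k)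
    case (Suc j)
    then have "xcl k = f (xcl j) (us j ! 0)"
      using run \<open>k \<le> K\<close> unfolding alg1_prefix_def by simp
    moreover have "us j \<in> eff (xcl j)"
      using eff_j Suc \<open>k \<le> K\<close> by simp
    then have "us j \<in> adm (xcl j)"
      by (rule eff_controls_imp_adm_controls)
    ultimately show ?thesis
      using adm_controls_first_state_in N_ge by simp
  qed (use run \<open>x0 \<in> X\<close> in \<open>simp add: alg1_prefix_def\<close>)
qed

lemma alg1_closed_loop_performance:
  assumes run: "\<forall>K. alg1 x0 K xcl us" and "x0 \<in> X"
  shows "summable (\<lambda>k. ell 1 (xcl k) (us k ! 0))"
    and "(\<Sum>k. ell 1 (xcl k) (us k ! 0)) \<le> J1 x0 (us 0)"
proof -
  note invariant = alg1_prefix_invariant[OF run[rule_format] \<open>x0 \<in> X\<close> order_refl]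
  have adm_k: "us k \<in> adm (xcl k)" for k
    using invariant(1) by (rule eff_controls_imp_adm_controls)
  have X_k: "xcl k \<in> X" for k
    by (fact invariant(2))
  have step: "xcl (Suc k) = f (xcl k) (us k ! 0)"
    and chosen_le_shifted: "J1 (xcl (Suc k)) (us (Suc k)) \<le> J1 (xcl (Suc k)) (shifted (xcl k) (us k))" for k
    using run[rule_format, of "Suc k"] unfolding alg1_prefix_def by auto
  have "xcl 0 = x0"
    using run unfolding alg1_prefix_def by blast
  have decrease: "J1 (xcl (Suc k)) (us (Suc k)) + ell 1 (xcl k) (us k ! 0) \<le> J1 (xcl k) (us k)" for k
    using J1_shifted_le[OF adm_k, of k] chosen_le_shifted[of k] step[of k] by simp
  have lower: "0 \<le> J1 (xcl k) (us k) + lam (xcl k)" for k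
    by (rule J1_plus_storage_nonneg[OF adm_k X_k])
  have dissipation:
    "alpha (norm (xcl k - xe)) \<le> ell 1 (xcl k) (us k ! 0) + lam (xcl k) - lam (xcl (Suc k))" for k
    using stage_cost_dissipation[OF X_k adm_controls_nth_in[OF adm_k, of 0], of k k] N_ge step[of k]
    by simp
  note performance = summable_stage_cost_of_dissipation[where V = "\<lambda>k. J1 (xcl k) (us k)"
      and e = "\<lambda>k. ell 1 (xcl k) (us k ! 0)" and x = xcl,
      OF alpha_K decrease lower dissipation lam_continuous_at_xe X_k]
  show "summable (\<lambda>k. ell 1 (xcl k) (us k ! 0))"
    by (fact performance(1))
  show "(\<Sum>k. ell 1 (xcl k) (us k ! 0)) \<le> J1 x0 (us 0)"
    using performance(2) lam_xe \<open>xcl 0 = x0\<close> by simp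
qed

end

theorem theorem4p5:
  fixes f :: "real ^ 'n \<Rightarrow> real ^ 'm \<Rightarrow> real ^ 'n"
    and X X0 :: "(real ^ 'n) set" and U :: "(real ^ 'm) set"
    and N s :: nat
    and ell :: "nat \<Rightarrow> real ^ 'n \<Rightarrow> real ^ 'm \<Rightarrow> real"
    and F1 :: "real ^ 'n \<Rightarrow> real"
    and xe :: "real ^ 'n" and ue :: "real ^ 'm"
    and lam1 :: "real ^ 'n \<Rightarrow> real"
    and alpha1 gamma :: "real \<Rightarrow> real"
    and \<kappa> :: "real ^ 'n \<Rightarrow> real ^ 'm"
    and x0 :: "real ^ 'n"
  assumes f_cont: "continuous_on UNIV (\<lambda>(x, u). f x u)"
    and X_ne: "X \<noteq> {}" and U_ne: "U \<noteq> {}" and X0_ne: "X0 \<noteq> {}" and X0_sub: "X0 \<subseteq> X"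
    and N_ge: "N \<ge> 2" and s_ge: "s \<ge> 2"
    and F1_cont: "continuous_on X0 F1" and F1_nonneg: "\<forall>x\<in>X0. F1 x \<ge> 0"
    \<comment> \<open>Assumption A (i)\<close>
    and eq_mem: "xe \<in> X" "ue \<in> U" and eq_fix: "f xe ue = xe"
    \<comment> \<open>Assumption A (ii)\<close>
    and lam_bdd: "bdd_below (lam1 ` X)" and lam_xe: "lam1 xe = 0"
    and alpha_K: "Kinf alpha1"
    and dissip: "\<forall>x\<in>X. \<forall>u\<in>U. ell 1 x u - ell 1 xe ue + lam1 x - lam1 (f x u)
                    \<ge> alpha1 (norm (x - xe) + norm (u - ue))"
    \<comment> \<open>Assumption A (iii)\<close>
    and ell_cont: "\<forall>i\<in>{1..s}. continuous_on (X \<times> U) (\<lambda>(x, u). ell i x u)"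
    \<comment> \<open>Assumption A (iv)\<close>
    and xe_X0: "xe \<in> X0"
    and kappa_U: "\<forall>x\<in>X0. \<kappa> x \<in> U"
    and kappa_inv: "\<forall>x\<in>X0. f x (\<kappa> x) \<in> X0"
    and kappa_dec: "\<forall>x\<in>X0. F1 (f x (\<kappa> x)) + ell 1 x (\<kappa> x) \<le> F1 x + ell 1 xe ue"
    \<comment> \<open>Assumption A (v)\<close>
    and ext_stab: "\<forall>x\<in>feasible_set f X U X0 N.
        externally_stable s
          (cost_vectors f N s ell F1 x (eff_controls f X U X0 N s ell F1 x))
          (cost_vectors f N s ell F1 x (adm_controls f X U X0 N x))"
    \<comment> \<open>additional hypotheses of the theorem\<close>
    and x0_feas: "x0 \<in> feasible_set f X U X0 N"
    and gamma_K: "Kinf gamma"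
    and lam_cont: "\<forall>x\<in>X. \<bar>lam1 x - lam1 xe\<bar> \<le> gamma (norm (x - xe))"
    and ell_eq: "ell 1 xe ue = 0"
  shows
    \<comment> \<open>Algorithm 1 is well defined: step (0) and every subsequent step admit a choice\<close>
    "(\<exists>us. us \<in> eff_controls f X U X0 N s ell F1 x0)
     \<and> (\<forall>K xcl us. alg1_prefix f X U X0 N s ell F1 \<kappa> x0 K xcl us \<longrightarrow>
          (\<exists>v. v \<in> eff_controls f X U X0 N s ell F1 (f (xcl K) (us K ! 0))
             \<and> Jcost f N ell F1 1 (f (xcl K) (us K ! 0)) v
                 \<le> Jcost f N ell F1 1 (f (xcl K) (us K ! 0)) (shifted_seq f N \<kappa> (xcl K) (us K))))
     \<comment> \<open>for every run: forward invariance and closed-loop performance bound\<close>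
     \<and> (\<forall>xcl us. (\<forall>K. alg1_prefix f X U X0 N s ell F1 \<kappa> x0 K xcl us) \<longrightarrow>
          (\<forall>k. xcl k \<in> X)
          \<and> summable (\<lambda>k. ell 1 (xcl k) (us k ! 0))
          \<and> (\<Sum>k. ell 1 (xcl k) (us k ! 0)) \<le> Jcost f N ell F1 1 x0 (us 0))"
proof -
  interpret dissipative_mpc f X X0 U N s ell F1 \<kappa> xe ue lam1 alpha1 gamma
    by (rule dissipative_mpc.intro) (fact assms | use s_ge in linarith)+
  have "x0 \<in> X"
    using x0_feas unfolding feasible_set_def by blast
  obtain u where "u \<in> adm x0"
    using x0_feas unfolding feasible_set_def by blast
  then have "\<exists>us. us \<in> eff x0"
    using exists_efficient_le[OF x0_feas] by blast
  moreover have "\<exists>v. v \<in> eff (f (xcl K) (us K ! 0))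
      \<and> J1 (f (xcl K) (us K ! 0)) v \<le> J1 (f (xcl K) (us K ! 0)) (shifted (xcl K) (us K))"
    if run: "alg1 x0 K xcl us" for K xcl us
  proof -
    have "us K \<in> adm (xcl K)"
      using alg1_prefix_invariant(1)[OF run \<open>x0 \<in> X\<close> order_refl]
      by (rule eff_controls_imp_adm_controls)
    then show ?thesis
      using exists_efficient_le[OF successor_feasible(1,2)] by blast
  qed
  moreover have "(\<forall>k. xcl k \<in> X) \<and> summable (\<lambda>k. ell 1 (xcl k) (us k ! 0))
      \<and> (\<Sum>k. ell 1 (xcl k) (us k ! 0)) \<le> J1 x0 (us 0)"
    if run: "\<forall>K. alg1 x0 K xcl us" for xcl us
    using alg1_prefix_invariant(2)[OF run[rule_format] \<open>x0 \<in> X\<close> order_refl]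
      alg1_closed_loop_performance[OF run \<open>x0 \<in> X\<close>] by blast
  ultimately show ?thesis
    by blast
qed

end
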